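(* For integers $m\ge1$, $n\ge2$, $$S(2m,n,\pi/2)=(-1)^mn+\frac{1}{(2m-1)!}\sum_{k=1}^m n^{2k}A_{2m}^{(2k)}T_{2k-1},$$ $$S(m,n,\pi/4)=(-1)^{m/2}\,n\,\mathbb{1}_{m\text{ even}}+\frac{1}{2(m-1)!}\sum_{k=1}^m(2n)^kA_m^{(k)}E_{k-1}.$$
   Context: $S(m,n,\alpha)=\sum_{k=0}^{n-1}\cot^m\frac{\alpha+k\pi}{n}$. The arctangent numbers $A_m^{(k)}$ are defined by $\frac{(\arctan z)^k}{k!}=\sum_{m\ge k}\frac{A_m^{(k)}}{m!}z^m$. The tangent numbers $T_j$ are given by $\tan z=\sum_{j\ge0}\frac{T_j}{j!}z^j$. The Euler zigzag numbers $E_j$ are given by $\tan z+\sec z=\sum_{j\ge0}\frac{E_j}{j!}z^j$. $\mathbb{1}_{m\text{ even}}$ is $1$ if $m$ is even and $0$ otherwise. *)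

theory Defs
  imports "HOL-Analysis.Analysis"
begin

definition S :: "nat \<Rightarrow> nat \<Rightarrow> real \<Rightarrow> real" where
  "S m n \<alpha> = (\<Sum>k<n. cot ((\<alpha> + real k * pi) / real n) ^ m)"

text \<open>Coefficients of an exponential generating function: the m-th Taylor
  coefficient times m!, i.e. the m-th derivative at 0.\<close>

definition arctan_num :: "nat \<Rightarrow> nat \<Rightarrow> real" where
  "arctan_num m k = (deriv ^^ m) (\<lambda>z. arctan z ^ k / fact k) 0"

definition tangent_num :: "nat \<Rightarrow> real" where
  "tangent_num j = (deriv ^^ j) tan 0"

definition zigzag_num :: "nat \<Rightarrow> real" where
  "zigzag_num j = (deriv ^^ j) (\<lambda>z. tan z + 1 / cos z) 0"

end

(*
  With theta_k = (alpha + k pi)/n and y_k = cis (2 theta_k), the y_k are the n-th roots of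
  z = cis (2 alpha), and cot theta_k = i (y_k + 1)/(y_k - 1).  Hence 1 - X cot theta_k is a
  multiple of y_k Q - P, where P = 1 + iX and Q = 1 - iX, and summing over the roots collapses to
    sum_j S(j,n,alpha) X^j = n/(1 + X^2) * (1 + X cot (alpha - n arctan X)),
  because P/Q = exp (2i arctan X).  For alpha = pi/2 and alpha = pi/4 the cotangent is
  tan (n arctan X) and tan (2n arctan X) + sec (2n arctan X) respectively.  Since
  arctan' = 1/(1 + X^2), X (G o arctan)/(1 + X^2) is X times the derivative of
  (integral of G) o arctan, so its coefficients are combinations of the coefficients of the
  powers of arctan X, i.e. of arctangent numbers.  The even tangent numbers vanish as tan is odd.
*)

theory Submission
  imports Defs
begin

section \<open>Taylor coefficients and the arctangent series\<close>

lemma higher_deriv_eval_fps_0: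
  fixes F :: "'a::{banach, real_normed_field} fps"
  assumes "fps_conv_radius F > 0"
  shows "(deriv ^^ n) (eval_fps F) 0 = fact n * fps_nth F n"
proof -
  have "(deriv ^^ n) (eval_fps F) 0 = eval_fps ((fps_deriv ^^ n) F) 0"
    using assms
  proof (induction n arbitrary: F)
    case (Suc n)
    have "eventually (\<lambda>z. z \<in> eball 0 (fps_conv_radius F)) (nhds 0)"
      using Suc.prems by (intro eventually_nhds_in_open) (auto simp: zero_ereal_def)
    then have "eventually (\<lambda>z. deriv (eval_fps F) z = eval_fps (fps_deriv F) z) (nhds 0)"
      by eventually_elim (simp add: eval_fps_deriv)
    then have "(deriv ^^ Suc n) (eval_fps F) 0 = (deriv ^^ n) (eval_fps (fps_deriv F)) 0"
      unfolding funpow_Suc_right o_def by (intro higher_deriv_cong_ev refl)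
    also have "\<dots> = eval_fps ((fps_deriv ^^ n) (fps_deriv F)) 0"
      using Suc.prems fps_conv_radius_deriv[of F] by (intro Suc.IH) auto
    finally show ?case
      by (simp only: funpow_Suc_right o_def)
  qed simp
  then show ?thesis
    by (simp add: eval_fps_at_0 fps_0th_higher_deriv)
qed

lemma higher_deriv_fps_expansion_0:
  fixes f :: "'a::{banach, real_normed_field} \<Rightarrow> 'a"
  assumes "f has_fps_expansion F"
  shows "(deriv ^^ n) f 0 = fact n * fps_nth F n"
proof -
  have "(deriv ^^ n) f 0 = (deriv ^^ n) (eval_fps F) 0"
    using assms by (intro higher_deriv_cong_ev) (auto simp: has_fps_expansion_def eq_commute)
  also have "\<dots> = fact n * fps_nth F n"
    using assms by (intro higher_deriv_eval_fps_0) (auto simp: has_fps_expansion_def)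
  finally show ?thesis .
qed

lemma has_fps_expansion_power [fps_expansion_intros]:
  fixes F :: "'a::{banach, real_normed_div_algebra, comm_ring_1} fps"
  assumes "f has_fps_expansion F"
  shows "(\<lambda>x. f x ^ k) has_fps_expansion F ^ k"
  by (induction k) (auto intro!: fps_expansion_intros assms)

definition fps_arctan :: "'a::field_char_0 fps" where
  "fps_arctan = fps_integral0 (inverse (1 + fps_X\<^sup>2))"

lemma fps_nth_inverse_1_plus_X2:
  "fps_nth (inverse (1 + fps_X\<^sup>2) :: 'a::field_char_0 fps) j = (if even j then (-1) ^ (j div 2) else 0)"
proof -
  define G :: "'a fps" where "G = Abs_fps (\<lambda>j. if even j then (-1) ^ (j div 2) else 0)"
  have "(1 + fps_X\<^sup>2) * G = 1"
  proof (rule fps_ext)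
    fix j
    show "fps_nth ((1 + fps_X\<^sup>2) * G) j = fps_nth 1 j"
    proof (cases "j < 2")
      case False
      then obtain k where "j = k + 2"
        by (metis add.commute le_Suc_ex not_less)
      then show ?thesis
        by (auto simp: G_def distrib_right fps_X_power_mult_nth)
    qed (auto simp: G_def distrib_right fps_X_power_mult_nth less_2_cases_iff)
  qed
  then show ?thesis
    by (simp add: fps_inverse_unique G_def)
qed

lemma fps_deriv_arctan: "fps_deriv fps_arctan = inverse (1 + fps_X\<^sup>2)"
  by (simp add: fps_arctan_def fps_deriv_fps_integral)

lemma fps_nth_arctan:
  "fps_nth fps_arctan j = (if even j then 0 else (-1) ^ (j div 2) / of_nat j)"
  by (cases j) (auto simp: fps_arctan_def fps_nth_inverse_1_plus_X2 field_simps)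

lemma has_fps_expansion_arctan [fps_expansion_intros]:
  "arctan has_fps_expansion fps_arctan"
proof (rule has_fps_expansionI)
  have "eventually (\<lambda>u::real. u \<in> ball 0 1) (nhds 0)"
    by (intro eventually_nhds_in_open) auto
  then show "eventually (\<lambda>u. (\<lambda>j. fps_nth fps_arctan j * u ^ j) sums arctan u) (nhds 0)"
  proof eventually_elim
    case (elim u)
    then have "\<bar>u\<bar> \<le> 1" by simp
    then have "(\<lambda>k. (-1)^k * (1 / real (k*2+1) * u ^ (k*2+1))) sums arctan u"
      using summable_arctan_series arctan_series by (simp add: sums_iff)
    from sums_if'[OF this] show ?case
      by (rule sums_cong[THEN iffD1, rotated]) (auto simp: fps_nth_arctan elim!: oddE)
  qed
qed

lemma fps_nth_arctan_power: "fps_nth (fps_arctan ^ k) m = arctan_num m k * fact k / fact m"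
proof -
  have "(\<lambda>z. arctan z ^ k * (1 / fact k)) has_fps_expansion fps_arctan ^ k * fps_const (1 / fact k)"
    by (intro fps_expansion_intros)
  from higher_deriv_fps_expansion_0[OF this, of m] show ?thesis
    by (simp add: arctan_num_def)
qed

lemma tangent_num_conv_fps: "tangent_num j = fact j * fps_nth (fps_tan 1) j"
  using higher_deriv_fps_expansion_0[OF has_fps_expansion_tan', of j]
  by (simp add: tangent_num_def)

lemma zigzag_num_conv_fps:
  "zigzag_num j = fact j * fps_nth (fps_tan 1 + inverse (fps_cos 1)) j"
proof -
  have "(\<lambda>z. tan z + inverse (cos z)) has_fps_expansion fps_tan 1 + inverse (fps_cos (1::real))"
    by (intro fps_expansion_intros) auto
  from higher_deriv_fps_expansion_0[OF this, of j] show ?thesis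
    by (simp add: zigzag_num_def inverse_eq_divide)
qed

lemma fps_sin_conv_compose_scale: "fps_sin c = fps_sin 1 oo (fps_const c * fps_X)"
  by (simp add: fps_compose_linear fps_eq_iff fps_sin_def)

lemma fps_cos_conv_compose_scale: "fps_cos c = fps_cos 1 oo (fps_const c * fps_X)"
  by (simp add: fps_compose_linear fps_eq_iff fps_cos_def)

lemma fps_tan_conv_compose_scale: "fps_tan c = fps_tan 1 oo (fps_const c * fps_X)"
  unfolding fps_tan_def
  by (subst fps_divide_compose)
    (simp_all add: fps_sin_conv_compose_scale[of c] fps_cos_conv_compose_scale[of c])

lemma fps_tan_plus_sec_conv_compose_scale:
  "fps_tan c + inverse (fps_cos c) = (fps_tan 1 + inverse (fps_cos 1)) oo (fps_const c * fps_X)"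
  by (simp add: fps_compose_add_distrib fps_inverse_compose
      fps_tan_conv_compose_scale[of c] fps_cos_conv_compose_scale[of c])

lemma fps_nth_tan_even: "fps_nth (fps_tan 1 :: 'a::field_char_0 fps) (2 * k) = 0"
proof -
  have "fps_tan (-1) = - (fps_tan 1 :: 'a fps)"
    by (simp add: fps_tan_def fps_sin_even fps_cos_odd fps_divide_uminus)
  then have "fps_nth (fps_tan (-1) :: 'a fps) (2 * k) = - fps_nth (fps_tan 1) (2 * k)"
    by simp
  moreover have "fps_nth (fps_tan (-1) :: 'a fps) (2 * k) = fps_nth (fps_tan 1) (2 * k)"
    by (subst fps_tan_conv_compose_scale) (simp add: fps_compose_linear)
  ultimately show ?thesis
    by (simp add: eq_neg_iff_add_eq_0 flip: mult_2)
qed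

lemma fps_nth_compose_arctan_over_1_plus_X2:
  fixes G :: "real fps"
  assumes "m \<ge> 1"
  shows "fps_nth (inverse (1 + fps_X\<^sup>2) * (1 + fps_X * (G oo fps_arctan))) m
       = (if even m then (-1) ^ (m div 2) else 0)
         + (\<Sum>k=1..m. arctan_num m k * (fact (k - 1) * fps_nth G (k - 1))) / fact (m - 1)"
proof -
  obtain m' where m': "m = Suc m'"
    using assms by (cases m) auto
  define L where "L = fps_integral0 G"
  have L_nth: "fps_nth L k = (if k = 0 then 0 else fps_nth G (k - 1) / of_nat k)" for k
    by (cases k) (simp_all add: L_def field_simps)
  have "inverse (1 + fps_X\<^sup>2) * (1 + fps_X * (G oo fps_arctan))
      = inverse (1 + fps_X\<^sup>2) + fps_X * fps_deriv (L oo fps_arctan)"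
    by (simp add: L_def fps_compose_deriv fps_deriv_fps_integral fps_deriv_arctan fps_nth_arctan
        algebra_simps)
  moreover have "fps_nth (fps_X * fps_deriv (L oo fps_arctan)) m = of_nat m * fps_nth (L oo fps_arctan) m"
    by (simp add: m' fps_X_mult_nth)
  moreover have "fps_nth (L oo fps_arctan) m = (\<Sum>k=1..m. fps_nth L k * fps_nth (fps_arctan ^ k) m)"
    by (simp add: fps_compose_nth sum.atLeast_Suc_atMost L_nth)
  moreover have "of_nat m * (fps_nth L k * fps_nth (fps_arctan ^ k) m)
      = arctan_num m k * (fact (k - 1) * fps_nth G (k - 1)) / fact (m - 1)" if k: "k \<in> {1..m}" for k
  proof -
    have "k > 0" "m > 0"
      using k by auto
    then show ?thesis
      unfolding fps_nth_arctan_power by (simp add: L_nth fact_reduce[of k] fact_reduce[of m])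
  qed
  ultimately show ?thesis
    by (simp add: fps_nth_inverse_1_plus_X2 sum_distrib_left sum_divide_distrib)
qed

definition fps_of_real :: "real fps \<Rightarrow> 'a::real_field fps" where
  "fps_of_real F = Abs_fps (\<lambda>n. of_real (fps_nth F n))"

lemma fps_nth_of_real [simp]: "fps_nth (fps_of_real F) n = of_real (fps_nth F n)"
  by (simp add: fps_of_real_def)

lemma fps_of_real_eq_iff [simp]: "fps_of_real F = fps_of_real G \<longleftrightarrow> F = G"
  by (simp add: fps_eq_iff)

lemma fps_of_real_add [simp]: "fps_of_real (F + G) = fps_of_real F + fps_of_real G"
  and fps_of_real_diff [simp]: "fps_of_real (F - G) = fps_of_real F - fps_of_real G"
  and fps_of_real_mult [simp]: "fps_of_real (F * G) = fps_of_real F * fps_of_real G"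
  and fps_of_real_const [simp]: "fps_of_real (fps_const c) = fps_const (of_real c)"
  and fps_of_real_1 [simp]: "fps_of_real 1 = 1"
  and fps_of_real_X [simp]: "fps_of_real fps_X = fps_X"
  by (simp_all add: fps_eq_iff fps_mult_nth fps_X_def)

lemma fps_of_real_of_nat [simp]: "fps_of_real (of_nat k) = of_nat k"
  by (simp flip: fps_of_nat)

lemma fps_of_real_power [simp]: "fps_of_real (F ^ k) = fps_of_real F ^ k"
  by (induction k) simp_all

lemma fps_of_real_sum [simp]: "fps_of_real (\<Sum>x\<in>A. f x) = (\<Sum>x\<in>A. fps_of_real (f x))"
  by (simp add: fps_eq_iff fps_sum_nth)

lemma fps_of_real_inverse [simp]:
  "fps_of_real (inverse F) = (inverse (fps_of_real F) :: 'a::real_field fps)"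
proof (cases "fps_nth F 0 = 0")
  case False
  then have "fps_of_real F * fps_of_real (inverse F) = (1 :: 'a fps)"
    by (simp flip: fps_of_real_mult add: inverse_mult_eq_1')
  from fps_inverse_unique[OF this] show ?thesis
    by (rule sym)
next
  case True
  then have "inverse F = 0" "inverse (fps_of_real F :: 'a fps) = 0"
    by (simp_all add: fps_inverse_eq_0_iff')
  then show ?thesis
    by (simp add: fps_eq_iff)
qed

lemma fps_of_real_compose [simp]: "fps_of_real (F oo G) = fps_of_real F oo fps_of_real G"
  by (simp add: fps_eq_iff fps_compose_nth flip: fps_of_real_power)

lemma fps_of_real_sin [simp]: "fps_of_real (fps_sin c) = fps_sin (of_real c)"
  and fps_of_real_cos [simp]: "fps_of_real (fps_cos c) = fps_cos (of_real c)"
  and fps_of_real_arctan [simp]: "fps_of_real fps_arctan = fps_arctan"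
  by (simp_all add: fps_eq_iff fps_sin_def fps_cos_def fps_nth_arctan)

lemma fps_of_real_tan [simp]: "fps_of_real (fps_tan c) = fps_tan (of_real c)"
  by (simp add: fps_tan_def fps_divide_unit)

section \<open>The generating function of cotangent power sums\<close>

abbreviation fps_P :: "complex fps" where "fps_P \<equiv> 1 + fps_const \<i> * fps_X"
abbreviation fps_Q :: "complex fps" where "fps_Q \<equiv> 1 - fps_const \<i> * fps_X"

lemma fps_const_i_squared: "fps_const \<i> * fps_const \<i> = (-1 :: complex fps)"
  by (simp flip: fps_const_mult)

lemma fps_P_mult_Q: "fps_P * fps_Q = 1 + fps_X\<^sup>2"
proof -
  have "fps_P * fps_Q = 1 - (fps_const \<i> * fps_const \<i>) * fps_X\<^sup>2"
    by (simp add: algebra_simps power2_eq_square)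
  then show ?thesis
    by (simp add: fps_const_i_squared)
qed

lemma fps_eq_0_of_linear_ode:
  fixes W :: "'a::field_char_0 fps"
  assumes ode: "(1 + fps_const c * fps_X) * fps_deriv W = fps_const c * W" and "fps_nth W 0 = 0"
  shows "W = 0"
proof -
  have "fps_nth W n = 0" for n
  proof (induction n)
    case (Suc n)
    have "fps_nth ((1 + fps_const c * fps_X) * fps_deriv W) n
        = of_nat (Suc n) * fps_nth W (Suc n) + (if n = 0 then 0 else c * (of_nat n * fps_nth W n))"
      by (cases n) (auto simp: distrib_right mult.assoc)
    with ode Suc.IH have "of_nat (Suc n) * fps_nth W (Suc n) = 0"
      by (auto split: if_splits)
    then show ?case
      by (simp del: of_nat_Suc)
  qed (use assms in simp)
  then show ?thesis
    by (simp add: fps_eq_iff)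
qed

lemma fps_exp_compose_arctan: "fps_exp (2 * \<i>) oo fps_arctan = fps_P * inverse fps_Q"
proof -
  \<comment> \<open>\<open>W = E Q - P\<close> solves the ODE \<open>P W' = i W\<close> with \<open>W(0) = 0\<close>\<close>
  define E where "E = fps_exp (2 * \<i>) oo (fps_arctan :: complex fps)"
  define I :: "complex fps" where "I = fps_const \<i>"
  have dE: "fps_deriv E = 2 * I * E * inverse (1 + fps_X\<^sup>2)"
    by (simp add: E_def I_def fps_compose_deriv fps_deriv_arctan fps_compose_mult_distrib fps_nth_arctan
        flip: fps_const_mult)
  have PQ: "fps_P * fps_Q * inverse (1 + fps_X\<^sup>2) = 1"
    by (simp add: fps_P_mult_Q inverse_mult_eq_1')
  define W where "W = E * fps_Q - fps_P"
  have "fps_deriv W = fps_deriv E * fps_Q - I * E - I"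
    by (simp add: W_def I_def algebra_simps flip: fps_const_neg)
  also have "\<dots> = 2 * I * E * inverse (1 + fps_X\<^sup>2) * fps_Q - I * E - I"
    by (simp add: dE)
  finally have "fps_P * fps_deriv W = I * W"
    using PQ unfolding W_def I_def by algebra
  then have "W = 0"
    unfolding I_def by (rule fps_eq_0_of_linear_ode) (simp add: W_def E_def I_def fps_nth_arctan)
  then have "E * fps_Q * inverse fps_Q = fps_P * inverse fps_Q"
    by (simp add: W_def)
  moreover have "fps_Q * inverse fps_Q = 1"
    by (simp add: inverse_mult_eq_1')
  ultimately show ?thesis
    by (simp add: E_def mult.assoc)
qed

lemma cis_double_minus_1: "cis (2 * t) - 1 = 2 * \<i> * complex_of_real (sin t) * cis t"
  by (simp add: complex_eq_iff cos_double_sin sin_double power2_eq_square)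

lemma cis_double_plus_1: "cis (2 * t) + 1 = 2 * complex_of_real (cos t) * cis t"
  by (simp add: complex_eq_iff cos_double_cos sin_double power2_eq_square)

lemma cis_double_minus_1_mult_cot:
  assumes "sin t \<noteq> 0"
  shows "(cis (2 * t) - 1) * complex_of_real (cot t) = \<i> * (cis (2 * t) + 1)"
  unfolding cis_double_minus_1 cis_double_plus_1 using assms by (simp add: cot_def field_simps)

lemma sum_cis_power_eq_0:
  assumes "0 < j" "j < n"
  shows "(\<Sum>k<n. cis (2 * ((\<alpha> + real k * pi) / real n)) ^ j) = 0"
proof -
  define w where "w = cis (2 * pi * real j / real n)"
  have "cis (2 * ((\<alpha> + real k * pi) / real n)) ^ j = cis (2 * \<alpha> * real j / real n) * w ^ k" for k
    by (simp add: w_def Complex.DeMoivre cis_mult add_divide_distrib algebra_simps)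
  then have "(\<Sum>k<n. cis (2 * ((\<alpha> + real k * pi) / real n)) ^ j) = cis (2 * \<alpha> * real j / real n) * (\<Sum>k<n. w ^ k)"
    by (simp add: sum_distrib_left)
  moreover have "w ^ n = 1"
    using assms by (simp add: w_def Complex.DeMoivre)
  moreover have "w \<noteq> 1"
    using assms complex_root_unity_eq_1[of n j] by (auto simp: w_def cis_conv_exp mult_ac dest: nat_dvd_not_less)
  ultimately show ?thesis
    by (simp add: sum_gp_strict)
qed

lemma power_sums_telescope:
  fixes y :: "nat \<Rightarrow> 'a::comm_ring_1"
  assumes "n > 0"
    and "\<And>j. 0 < j \<Longrightarrow> j < n \<Longrightarrow> (\<Sum>k<n. y k ^ j) = 0"
    and "(\<Sum>k<n. y k ^ n) = of_nat n * z"
  shows "(\<Sum>k<n. (y k - 1) * (\<Sum>i<n. P ^ (n - Suc i) * (y k * Q) ^ i))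
       = of_nat n * (z * Q ^ (n - 1) - P ^ (n - 1))"
proof -
  define c where "c j = (\<Sum>k<n. y k ^ j)" for j
  have c: "c j = (if j = 0 then of_nat n else 0) + (if j = n then of_nat n * z else 0)" if "j \<le> n" for j
    using that assms by (auto simp: c_def)
  have summand: "(y k - 1) * (P ^ (n - Suc i) * (y k * Q) ^ i) = ((y k - 1) * y k ^ i) * (P ^ (n - Suc i) * Q ^ i)"
    for k i
    by (simp add: power_mult_distrib mult_ac)
  have c_diff: "(\<Sum>k<n. (y k - 1) * y k ^ i) = c (Suc i) - c i" for i
    by (simp add: c_def algebra_simps sum_subtractf)
  have "(\<Sum>k<n. (y k - 1) * (\<Sum>i<n. P ^ (n - Suc i) * (y k * Q) ^ i))
      = (\<Sum>k<n. \<Sum>i<n. ((y k - 1) * y k ^ i) * (P ^ (n - Suc i) * Q ^ i))"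
    by (simp add: sum_distrib_left summand)
  also have "\<dots> = (\<Sum>i<n. \<Sum>k<n. ((y k - 1) * y k ^ i) * (P ^ (n - Suc i) * Q ^ i))"
    by (rule sum.swap)
  also have "\<dots> = (\<Sum>i<n. (c (Suc i) - c i) * (P ^ (n - Suc i) * Q ^ i))"
    by (simp only: c_diff flip: sum_distrib_right)
  also have "\<dots> = (\<Sum>i<n. (if i = n - 1 then of_nat n * z * (P ^ (n - Suc i) * Q ^ i) else 0)
                   - (if i = 0 then of_nat n * (P ^ (n - Suc i) * Q ^ i) else 0))"
  proof (rule sum.cong[OF refl])
    fix i
    assume "i \<in> {..<n}"
    then have "c (Suc i) - c i = (if i = n - 1 then of_nat n * z else 0) - (if i = 0 then of_nat n else 0)"
      using c[of i] c[of "Suc i"] by auto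
    then show "(c (Suc i) - c i) * (P ^ (n - Suc i) * Q ^ i)
        = (if i = n - 1 then of_nat n * z * (P ^ (n - Suc i) * Q ^ i) else 0)
          - (if i = 0 then of_nat n * (P ^ (n - Suc i) * Q ^ i) else 0)"
      by (simp add: left_diff_distrib)
  qed
  also have "\<dots> = of_nat n * (z * Q ^ (n - 1) - P ^ (n - 1))"
    using assms by (simp add: sum_subtractf right_diff_distrib mult.assoc)
  finally show ?thesis .
qed

lemma sum_inverse_1_minus_cot_X_mult:
  fixes \<alpha> :: real
  assumes "n > 0" "0 < \<alpha>" "\<alpha> < pi"
  defines "z \<equiv> fps_const (cis (2 * \<alpha>))"
  shows "(\<Sum>k<n. inverse (1 - fps_const (complex_of_real (cot ((\<alpha> + real k * pi) / real n))) * fps_X))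
           * (z * fps_Q ^ n - fps_P ^ n)
         = of_nat n * (z * fps_Q ^ (n - 1) - fps_P ^ (n - 1))"
proof -
  define \<theta> where "\<theta> k = (\<alpha> + real k * pi) / real n" for k
  define x where "x k = fps_const (complex_of_real (cot (\<theta> k)))" for k
  define y where "y k = fps_const (cis (2 * \<theta> k))" for k
  define S where "S k = (\<Sum>i<n. fps_P ^ (n - Suc i) * (y k * fps_Q) ^ i)" for k
  have y_power_n: "y k ^ n = z" for k
  proof -
    have "real n * (2 * \<theta> k) = 2 * \<alpha> + 2 * pi * real k"
      using assms by (simp add: \<theta>_def field_simps)
    then show ?thesis
      by (simp add: y_def z_def fps_const_power Complex.DeMoivre cis_mult[symmetric])
  qed
  have factor: "(1 - x k * fps_X) * ((y k - 1) * S k) = z * fps_Q ^ n - fps_P ^ n" if "k < n" for k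
  proof -
    have "(real k + 1) * pi \<le> real n * pi"
      using that by (intro mult_right_mono) auto
    then have "0 < \<theta> k" "\<theta> k < pi"
      using assms by (auto simp: \<theta>_def field_simps intro!: add_pos_nonneg)
    then have "(cis (2 * \<theta> k) - 1) * complex_of_real (cot (\<theta> k)) = \<i> * (cis (2 * \<theta> k) + 1)"
      by (intro cis_double_minus_1_mult_cot) (simp add: sin_gt_zero less_imp_neq[symmetric])
    then have "(y k - 1) * x k = fps_const \<i> * (y k + 1)"
      unfolding x_def y_def by (metis fps_const_1_eq_1 fps_const_add fps_const_mult fps_const_sub)
    then have "(1 - x k * fps_X) * (y k - 1) = y k * fps_Q - fps_P"
      by algebra
    moreover have "(y k * fps_Q - fps_P) * S k = z * fps_Q ^ n - fps_P ^ n"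
      using power_diff_sumr2[of "y k * fps_Q" n fps_P] by (simp add: S_def power_mult_distrib y_power_n)
    ultimately show ?thesis
      by (metis mult.assoc)
  qed
  have "inverse (1 - x k * fps_X) * (z * fps_Q ^ n - fps_P ^ n) = (y k - 1) * S k" if "k < n" for k
  proof -
    have "inverse (1 - x k * fps_X) * (z * fps_Q ^ n - fps_P ^ n)
        = (inverse (1 - x k * fps_X) * (1 - x k * fps_X)) * ((y k - 1) * S k)"
      by (simp only: factor[OF that] mult.assoc)
    then show ?thesis
      by (simp add: inverse_mult_eq_1)
  qed
  then have "(\<Sum>k<n. inverse (1 - x k * fps_X)) * (z * fps_Q ^ n - fps_P ^ n) = (\<Sum>k<n. (y k - 1) * S k)"
    by (simp add: sum_distrib_right)
  also have "\<dots> = of_nat n * (z * fps_Q ^ (n - 1) - fps_P ^ (n - 1))"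
    unfolding S_def
  proof (rule power_sums_telescope)
    have fps_const_sum: "(\<Sum>k<n. fps_const (f k)) = fps_const (\<Sum>k<n. f k)" for f :: "nat \<Rightarrow> complex"
      by (simp add: fps_eq_iff fps_sum_nth)
    show "(\<Sum>k<n. y k ^ j) = 0" if "0 < j" "j < n" for j
      using sum_cis_power_eq_0[OF that, of \<alpha>] by (simp add: y_def fps_const_sum \<theta>_def)
    show "(\<Sum>k<n. y k ^ n) = of_nat n * z"
      by (simp add: y_power_n)
  qed (use assms in simp)
  finally show ?thesis
    by (simp add: x_def \<theta>_def)
qed

text \<open>The hypothesis on \<open>T\<close> determines it, since \<open>P\<^sup>n - z Q\<^sup>n\<close> is a unit; it says that \<open>T\<close> is the
  expansion of \<open>cot (\<alpha> - n arctan X)\<close>.\<close>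

lemma sum_inverse_1_minus_cot_X_eq:
  fixes \<alpha> :: real and T :: "complex fps"
  assumes "n > 0" "0 < \<alpha>" "\<alpha> < pi"
  defines "z \<equiv> fps_const (cis (2 * \<alpha>))"
  assumes T: "T * (fps_P ^ n - z * fps_Q ^ n) = - fps_const \<i> * (fps_P ^ n + z * fps_Q ^ n)"
  shows "(\<Sum>k<n. inverse (1 - fps_const (complex_of_real (cot ((\<alpha> + real k * pi) / real n))) * fps_X))
       = of_nat n * inverse (1 + fps_X\<^sup>2) * (1 + fps_X * T)"
proof -
  define G where "G = (\<Sum>k<n. inverse (1 - fps_const (complex_of_real (cot ((\<alpha> + real k * pi) / real n))) * fps_X))"
  define D where "D = z * fps_Q ^ n - fps_P ^ n"
  define N where "N = of_nat n * (z * fps_Q ^ (n - 1) - fps_P ^ (n - 1))"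
  have GD: "G * D = N"
    using sum_inverse_1_minus_cot_X_mult[OF assms(1-3)] by (simp add: G_def D_def N_def z_def)
  have RD: "(of_nat n * inverse (1 + fps_X\<^sup>2) * (1 + fps_X * T)) * D = N"
  proof -
    obtain m where n: "n = Suc m"
      using assms(1) by (cases n) auto
    have "(1 + fps_X * T) * D = D - fps_X * (T * (fps_P ^ n - z * fps_Q ^ n))"
      by (simp add: D_def algebra_simps)
    also have "\<dots> = D + fps_const \<i> * fps_X * (fps_P ^ n + z * fps_Q ^ n)"
      unfolding T by algebra
    also have "\<dots> = fps_P * fps_Q * (z * fps_Q ^ (n - 1) - fps_P ^ (n - 1))"
      unfolding D_def n diff_Suc_1 power_Suc by algebra
    finally have "(1 + fps_X * T) * D = (1 + fps_X\<^sup>2) * (z * fps_Q ^ (n - 1) - fps_P ^ (n - 1))"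
      by (simp only: fps_P_mult_Q)
    then show ?thesis
      by (simp add: N_def inverse_mult_eq_1 mult.assoc)
  qed
  have unit: "D * inverse D = 1"
  proof -
    have "fps_nth D 0 = 2 * \<i> * complex_of_real (sin \<alpha>) * cis \<alpha>"
      by (simp add: D_def z_def fps_nth_power_0 cis_double_minus_1)
    moreover have "sin \<alpha> \<noteq> 0"
      using assms(2,3) sin_gt_zero[of \<alpha>] by simp
    ultimately show ?thesis
      by (simp add: inverse_mult_eq_1')
  qed
  have "G * (D * inverse D) = (of_nat n * inverse (1 + fps_X\<^sup>2) * (1 + fps_X * T)) * (D * inverse D)"
    by (simp only: GD RD flip: mult.assoc)
  then show ?thesis
    by (simp add: G_def unit)
qed

lemma sum_inverse_1_minus_cot_X_eq_real:
  fixes \<alpha> :: real and T :: "real fps"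
  assumes "n > 0" "0 < \<alpha>" "\<alpha> < pi"
  defines "z \<equiv> fps_const (cis (2 * \<alpha>))"
  assumes "fps_of_real T * (fps_P ^ n - z * fps_Q ^ n) = - fps_const \<i> * (fps_P ^ n + z * fps_Q ^ n)"
  shows "(\<Sum>k<n. inverse (1 - fps_const (cot ((\<alpha> + real k * pi) / real n)) * fps_X))
       = fps_const (real n) * inverse (1 + fps_X\<^sup>2) * (1 + fps_X * T)"
proof -
  have "(fps_of_real (\<Sum>k<n. inverse (1 - fps_const (cot ((\<alpha> + real k * pi) / real n)) * fps_X)) :: complex fps)
      = fps_of_real (fps_const (real n) * inverse (1 + fps_X\<^sup>2) * (1 + fps_X * T))"
    using sum_inverse_1_minus_cot_X_eq[OF assms(1-3) assms(5)[unfolded z_def]] by (simp add: fps_of_nat)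
  then show ?thesis
    by (simp only: fps_of_real_eq_iff)
qed

lemma fps_tan_conv_mult_inverse: "fps_tan c = fps_sin c * inverse (fps_cos c)"
  by (simp add: fps_tan_def fps_divide_unit)

lemma fps_tan_mult_exp:
  "fps_tan c * (fps_const \<i> * (fps_exp (2 * \<i> * c) + 1)) = fps_exp (2 * \<i> * c) - 1"
proof -
  have "fps_exp (2 * \<i> * c) = (fps_cos c + fps_const \<i> * fps_sin c)\<^sup>2"
    by (simp add: fps_exp_power_mult mult.assoc flip: fps_exp_ii_sin_cos)
  moreover have "fps_cos c * inverse (fps_cos c) = 1"
    by (simp add: inverse_mult_eq_1')
  ultimately show ?thesis
    using fps_sin_cos_sum_of_squares[of c] fps_const_i_squared
    unfolding fps_tan_conv_mult_inverse by algebra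
qed

lemma fps_tan_plus_sec_mult_exp:
  "(fps_tan c + inverse (fps_cos c)) * (fps_exp (\<i> * c) - fps_const \<i>)
     = - fps_const \<i> * (fps_exp (\<i> * c) + fps_const \<i>)"
proof -
  have "fps_cos c * inverse (fps_cos c) = 1"
    by (simp add: inverse_mult_eq_1')
  then show ?thesis
    using fps_sin_cos_sum_of_squares[of c] fps_const_i_squared
    unfolding fps_tan_conv_mult_inverse fps_exp_ii_sin_cos by algebra
qed

lemma fps_exp_compose_arctan_mult_Q_power:
  "(fps_exp (2 * \<i> * of_nat n) oo fps_arctan) * fps_Q ^ n = fps_P ^ n"
proof -
  have "fps_exp (2 * \<i> * of_nat n) oo fps_arctan = (fps_exp (2 * \<i>) oo fps_arctan) ^ n"
    by (simp add: fps_compose_power fps_nth_arctan fps_exp_power_mult mult_ac)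
  also have "\<dots> = (fps_P * inverse fps_Q) ^ n"
    by (simp only: fps_exp_compose_arctan)
  finally have "(fps_exp (2 * \<i> * of_nat n) oo fps_arctan) * fps_Q ^ n
      = fps_P ^ n * (inverse fps_Q * fps_Q) ^ n"
    by (simp add: power_mult_distrib mult_ac)
  then show ?thesis
    by (simp add: inverse_mult_eq_1)
qed

lemma sum_inverse_1_minus_cot_X_half_pi:
  assumes "n > 0"
  shows "(\<Sum>k<n. inverse (1 - fps_const (cot ((pi / 2 + real k * pi) / real n)) * fps_X))
       = fps_const (real n) * inverse (1 + fps_X\<^sup>2) * (1 + fps_X * (fps_tan (real n) oo fps_arctan))"
proof (rule sum_inverse_1_minus_cot_X_eq_real)
  define W where "W = fps_exp (2 * \<i> * of_nat n) oo (fps_arctan :: complex fps)"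
  define T where "T = fps_tan (of_nat n) oo (fps_arctan :: complex fps)"
  have "(fps_tan (of_nat n) * (fps_const \<i> * (fps_exp (2 * \<i> * of_nat n) + 1))) oo fps_arctan
      = (fps_exp (2 * \<i> * of_nat n) - 1) oo (fps_arctan :: complex fps)"
    by (simp only: fps_tan_mult_exp)
  then have tan: "T * (fps_const \<i> * (W + 1)) * fps_Q ^ n = (W - 1) * fps_Q ^ n"
    by (simp add: T_def W_def fps_compose_mult_distrib fps_compose_add_distrib fps_compose_sub_distrib
        fps_nth_arctan)
  have W: "W * fps_Q ^ n = fps_P ^ n"
    unfolding W_def by (rule fps_exp_compose_arctan_mult_Q_power)
  \<comment> \<open>with \<open>P\<^sup>n\<close> and \<open>Q\<^sup>n\<close> abstracted, so that \<open>algebra\<close> treats them as atoms\<close>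
  have alg: "t * (A - (-1) * B) = - fps_const \<i> * (A + (-1) * B)"
    if "t * (fps_const \<i> * (w + 1)) * B = (w - 1) * B" "w * B = A" for t w A B :: "complex fps"
    using that fps_const_i_squared by algebra
  have T: "fps_of_real (fps_tan (real n) oo fps_arctan) = T"
    by (simp add: T_def)
  have z: "fps_const (cis (2 * (pi / 2))) = -1"
    by (simp flip: fps_const_neg)
  show "fps_of_real (fps_tan (real n) oo fps_arctan)
      * (fps_P ^ n - fps_const (cis (2 * (pi / 2))) * fps_Q ^ n)
      = - fps_const \<i> * (fps_P ^ n + fps_const (cis (2 * (pi / 2))) * fps_Q ^ n)"
    unfolding T z by (rule alg[OF tan W])
qed (use assms in simp_all)

lemma sum_inverse_1_minus_cot_X_quarter_pi:
  assumes "n > 0"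
  shows "(\<Sum>k<n. inverse (1 - fps_const (cot ((pi / 4 + real k * pi) / real n)) * fps_X))
       = fps_const (real n) * inverse (1 + fps_X\<^sup>2)
         * (1 + fps_X * ((fps_tan (2 * real n) + inverse (fps_cos (2 * real n))) oo fps_arctan))"
proof (rule sum_inverse_1_minus_cot_X_eq_real)
  define W where "W = fps_exp (2 * \<i> * of_nat n) oo (fps_arctan :: complex fps)"
  define T where
    "T = (fps_tan (2 * of_nat n) + inverse (fps_cos (2 * of_nat n))) oo (fps_arctan :: complex fps)"
  have "((fps_tan (2 * of_nat n) + inverse (fps_cos (2 * of_nat n)))
          * (fps_exp (\<i> * (2 * of_nat n)) - fps_const \<i>)) oo fps_arctan
      = (- fps_const \<i> * (fps_exp (\<i> * (2 * of_nat n)) + fps_const \<i>)) oo (fps_arctan :: complex fps)"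
    by (simp only: fps_tan_plus_sec_mult_exp)
  then have tan_sec: "T * (W - fps_const \<i>) * fps_Q ^ n = - fps_const \<i> * (W + fps_const \<i>) * fps_Q ^ n"
    by (simp add: T_def W_def fps_compose_mult_distrib fps_compose_add_distrib fps_compose_sub_distrib
        fps_nth_arctan mult_ac)
  have W: "W * fps_Q ^ n = fps_P ^ n"
    unfolding W_def by (rule fps_exp_compose_arctan_mult_Q_power)
  have alg: "t * (A - fps_const \<i> * B) = - fps_const \<i> * (A + fps_const \<i> * B)"
    if "t * (w - fps_const \<i>) * B = - fps_const \<i> * (w + fps_const \<i>) * B" "w * B = A"
    for t w A B :: "complex fps"
    using that by algebra
  have T: "fps_of_real ((fps_tan (2 * real n) + inverse (fps_cos (2 * real n))) oo fps_arctan) = T"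
    by (simp add: T_def)
  have z: "cis (2 * (pi / 4)) = \<i>"
    by (simp add: complex_eq_iff)
  show "fps_of_real ((fps_tan (2 * real n) + inverse (fps_cos (2 * real n))) oo fps_arctan)
      * (fps_P ^ n - fps_const (cis (2 * (pi / 4))) * fps_Q ^ n)
      = - fps_const \<i> * (fps_P ^ n + fps_const (cis (2 * (pi / 4))) * fps_Q ^ n)"
    unfolding T z by (rule alg[OF tan_sec W])
qed (use assms in simp_all)

section \<open>Reading off the coefficients\<close>

lemma fps_nth_inverse_1_minus_const_X:
  "fps_nth (inverse (1 - fps_const c * fps_X) :: 'a::field fps) j = c ^ j"
proof -
  have "(1 - fps_const c * fps_X) * Abs_fps (\<lambda>j. c ^ j) = 1"
  proof (rule fps_ext)
    fix j
    show "fps_nth ((1 - fps_const c * fps_X) * Abs_fps (\<lambda>j. c ^ j)) j = fps_nth 1 j"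
      by (cases j) (auto simp: algebra_simps mult.assoc)
  qed
  from fps_inverse_unique[OF this] show ?thesis
    by simp
qed

lemma fps_nth_sum_inverse_1_minus_cot_X:
  "fps_nth (\<Sum>k<n. inverse (1 - fps_const (cot ((\<alpha> + real k * pi) / real n)) * fps_X)) j = S j n \<alpha>"
  by (simp add: fps_sum_nth fps_nth_inverse_1_minus_const_X S_def)

lemma fact_mult_fps_nth_tan: "fact j * fps_nth (fps_tan c) j = c ^ j * tangent_num j"
  by (simp add: tangent_num_conv_fps fps_tan_conv_compose_scale[of c] fps_compose_linear)

lemma fact_mult_fps_nth_tan_plus_sec:
  "fact j * fps_nth (fps_tan c + inverse (fps_cos c)) j = c ^ j * zigzag_num j"
  by (simp only: zigzag_num_conv_fps fps_tan_plus_sec_conv_compose_scale[of c] fps_compose_linear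
      fps_nth_Abs_fps mult.left_commute)

lemma tangent_num_even: "tangent_num (2 * j) = 0"
  by (simp add: tangent_num_conv_fps fps_nth_tan_even)

lemma sum_atLeast1_double_odd_eq_0:
  fixes f :: "nat \<Rightarrow> 'a::comm_monoid_add"
  assumes "\<And>k. odd k \<Longrightarrow> f k = 0"
  shows "(\<Sum>k=1..2*m. f k) = (\<Sum>k=1..m. f (2 * k))"
proof (induction m)
  case (Suc m)
  have "(\<Sum>k=1..2 * Suc m. f k) = (\<Sum>k=1..2*m. f k) + f (2 * m + 1) + f (2 * m + 2)"
    by (simp add: add.assoc)
  with Suc.IH assms show ?case
    by simp
qed simp

lemma S_half_pi_eq:
  assumes "m \<ge> 1" "n > 0"
  shows "S (2*m) n (pi/2) = (-1)^m * real n
           + (1 / fact (2*m - 1)) * (\<Sum>k=1..m. real n ^ (2*k) * arctan_num (2*m) (2*k) * tangent_num (2*k - 1))"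
proof -
  have "S (2*m) n (pi/2)
      = fps_nth (\<Sum>k<n. inverse (1 - fps_const (cot ((pi/2 + real k * pi) / real n)) * fps_X)) (2*m)"
    by (simp only: fps_nth_sum_inverse_1_minus_cot_X)
  also have "\<dots> = real n * fps_nth (inverse (1 + fps_X\<^sup>2) * (1 + fps_X * (fps_tan (real n) oo fps_arctan))) (2*m)"
    by (simp only: sum_inverse_1_minus_cot_X_half_pi[OF assms(2)] mult.assoc fps_mult_left_const_nth)
  also have "\<dots> = real n * ((-1)^m
      + (\<Sum>k=1..2*m. arctan_num (2*m) k * (real n ^ (k - 1) * tangent_num (k - 1))) / fact (2*m - 1))"
    using assms(1) by (simp add: fps_nth_compose_arctan_over_1_plus_X2 fact_mult_fps_nth_tan)
  finally have coeff: "S (2*m) n (pi/2) = real n * ((-1)^m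
      + (\<Sum>k=1..2*m. arctan_num (2*m) k * (real n ^ (k - 1) * tangent_num (k - 1))) / fact (2*m - 1))" .
  have odd_vanish: "(\<Sum>k=1..2*m. arctan_num (2*m) k * (real n ^ (k - 1) * tangent_num (k - 1)))
      = (\<Sum>k=1..m. arctan_num (2*m) (2*k) * (real n ^ (2*k - 1) * tangent_num (2*k - 1)))"
    by (rule sum_atLeast1_double_odd_eq_0) (auto elim!: oddE simp: tangent_num_even)
  have powers: "(\<Sum>k=1..m. real n ^ (2*k) * arctan_num (2*m) (2*k) * tangent_num (2*k - 1))
      = real n * (\<Sum>k=1..m. arctan_num (2*m) (2*k) * (real n ^ (2*k - 1) * tangent_num (2*k - 1)))"
    unfolding sum_distrib_left
  proof (intro sum.cong refl)
    fix k :: nat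
    assume "k \<in> {1..m}"
    then obtain j where "k = Suc j"
      by (cases k) auto
    then show "real n ^ (2*k) * arctan_num (2*m) (2*k) * tangent_num (2*k - 1)
        = real n * (arctan_num (2*m) (2*k) * (real n ^ (2*k - 1) * tangent_num (2*k - 1)))"
      by (simp add: mult_ac)
  qed
  show ?thesis
    unfolding coeff odd_vanish powers by (simp add: field_simps)
qed

lemma S_quarter_pi_eq:
  assumes "m \<ge> 1" "n > 0"
  shows "S m n (pi/4) = (if even m then (-1)^(m div 2) * real n else 0)
           + (1 / (2 * fact (m - 1))) * (\<Sum>k=1..m. (2 * real n) ^ k * arctan_num m k * zigzag_num (k - 1))"
proof -
  have "S m n (pi/4)
      = fps_nth (\<Sum>k<n. inverse (1 - fps_const (cot ((pi/4 + real k * pi) / real n)) * fps_X)) m"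
    by (simp only: fps_nth_sum_inverse_1_minus_cot_X)
  also have "\<dots> = real n * fps_nth (inverse (1 + fps_X\<^sup>2)
      * (1 + fps_X * ((fps_tan (2 * real n) + inverse (fps_cos (2 * real n))) oo fps_arctan))) m"
    by (simp only: sum_inverse_1_minus_cot_X_quarter_pi[OF assms(2)] mult.assoc fps_mult_left_const_nth)
  also have "\<dots> = real n * ((if even m then (-1)^(m div 2) else 0)
      + (\<Sum>k=1..m. arctan_num m k * ((2 * real n) ^ (k - 1) * zigzag_num (k - 1))) / fact (m - 1))"
    unfolding fps_nth_compose_arctan_over_1_plus_X2[OF assms(1)] fact_mult_fps_nth_tan_plus_sec ..
  finally have coeff: "S m n (pi/4) = real n * ((if even m then (-1)^(m div 2) else 0)
      + (\<Sum>k=1..m. arctan_num m k * ((2 * real n) ^ (k - 1) * zigzag_num (k - 1))) / fact (m - 1))" .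
  have powers: "(\<Sum>k=1..m. (2 * real n) ^ k * arctan_num m k * zigzag_num (k - 1))
      = 2 * (real n * (\<Sum>k=1..m. arctan_num m k * ((2 * real n) ^ (k - 1) * zigzag_num (k - 1))))"
    unfolding sum_distrib_left
  proof (intro sum.cong refl)
    fix k :: nat
    assume "k \<in> {1..m}"
    then obtain j where "k = Suc j"
      by (cases k) auto
    then show "(2 * real n) ^ k * arctan_num m k * zigzag_num (k - 1)
        = 2 * (real n * (arctan_num m k * ((2 * real n) ^ (k - 1) * zigzag_num (k - 1))))"
      by (simp add: mult_ac)
  qed
  show ?thesis
    unfolding coeff powers by (simp add: field_simps)
qed

theorem corollary6p6:
  fixes m n :: nat
  assumes "m \<ge> 1" and "n \<ge> 2"
  shows "S (2*m) n (pi/2) = (-1)^m * real n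
           + (1 / fact (2*m - 1)) * (\<Sum>k=1..m. real n ^ (2*k) * arctan_num (2*m) (2*k) * tangent_num (2*k - 1))
       \<and> S m n (pi/4) = (if even m then (-1)^(m div 2) * real n else 0)
           + (1 / (2 * fact (m - 1))) * (\<Sum>k=1..m. (2 * real n) ^ k * arctan_num m k * zigzag_num (k - 1))"
  using S_half_pi_eq[OF assms(1)] S_quarter_pi_eq[OF assms(1)] assms(2) by simp

end
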